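(* Let $p$ be a prime and $n \geq 2$. Let $N$ be the cyclic group of order $p^n$, let $K$ be the Sylow $p$-subgroup of $\mathrm{Aut}(N)$, and let $G := N \rtimes K$ (with the natural action). Then $|G:G'| = p^n$, and $|\gamma_i(G):\gamma_{i+1}(G)| = p$ for every $i = 2,\dots,n$.
   Context: $G'$ is the commutator subgroup of $G$, and $\gamma_i(G)$ denotes the $i$-th term of the lower central series, with $\gamma_1(G)=G$ and $\gamma_{i+1}(G)=[\gamma_i(G),G]$. *)

theory Defs
  imports "HOL-Algebra.Algebra" "HOL-Computational_Algebra.Primes"
begin

definition Zcyc :: "nat \<Rightarrow> nat monoid" where
  "Zcyc m = \<lparr>carrier = {0..<m}, monoid.mult = (\<lambda>a b. (a + b) mod m), monoid.one = 0\<rparr>"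

definition sdprod :: "('a, 'c) monoid_scheme \<Rightarrow> (('a \<Rightarrow> 'a), 'd) monoid_scheme
                      \<Rightarrow> ('a \<times> ('a \<Rightarrow> 'a)) monoid" where
  "sdprod N H = \<lparr>carrier = carrier N \<times> carrier H,
                 monoid.mult = (\<lambda>(a, f) (b, g). (a \<otimes>\<^bsub>N\<^esub> f b, f \<otimes>\<^bsub>H\<^esub> g)),
                 monoid.one = (\<one>\<^bsub>N\<^esub>, \<one>\<^bsub>H\<^esub>)\<rparr>"

text \<open>Lower central series, indexed from 1: gamma G 1 = G, gamma G (i+1) = [gamma G i, G].\<close>
fun lcs :: "('a, 'b) monoid_scheme \<Rightarrow> nat \<Rightarrow> 'a set" where
  "lcs G 0 = carrier G"
| "lcs G (Suc 0) = carrier G"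
| "lcs G (Suc (Suc i)) =
     generate G (\<Union>h \<in> lcs G (Suc i). \<Union>g \<in> carrier G.
                   {h \<otimes>\<^bsub>G\<^esub> g \<otimes>\<^bsub>G\<^esub> inv\<^bsub>G\<^esub> h \<otimes>\<^bsub>G\<^esub> inv\<^bsub>G\<^esub> g})"

end

theory Submission
  imports Defs "HOL-Number_Theory.Number_Theory"
begin

text \<open>Every automorphism of \<open>N = \<int>/p\<^sup>n\<close> is multiplication by a unit \<open>u\<close>, so \<open>K\<close> is abelian of
  order \<open>p\<^sup>n\<^sup>-\<^sup>1\<close>. Since these multipliers have \<open>p\<close>-power order they are all \<open>\<equiv> 1 (mod p)\<close>,
  and by counting some multiplier \<open>v\<close> is not \<open>\<equiv> 1 (mod p\<^sup>2)\<close>, i.e. \<open>1 - v\<close> is \<open>p\<close> times a unit.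
  In \<open>G = N \<rtimes> K\<close> the commutator of \<open>(a, u)\<close> and \<open>(b, v)\<close> is \<open>(a(1 - v) - b(1 - u), 1)\<close>.
  Hence commutators of \<open>p\<^sup>jN\<close> (or of \<open>G\<close> itself when \<open>j = 0\<close>) with \<open>G\<close> lie in \<open>p\<^sup>j\<^sup>+\<^sup>1N\<close>,
  and the commutators \<open>[(a, 1), (0, v)]\<close> already exhaust \<open>p\<^sup>j\<^sup>+\<^sup>1N\<close>. So
  \<open>\<gamma>\<^sub>j\<^sub>+\<^sub>1(G) = p\<^sup>jN\<close> for \<open>1 \<le> j \<le> n\<close>, and the indices follow from Lagrange's theorem,
  \<open>|G| = p\<^sup>2\<^sup>n\<^sup>-\<^sup>1\<close> and \<open>|p\<^sup>jN| = p\<^sup>n\<^sup>-\<^sup>j\<close>.\<close>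

lemma carrier_Zcyc [simp]: "carrier (Zcyc m) = {0..<m}"
  by (simp add: Zcyc_def)

lemma mult_Zcyc [simp]: "x \<otimes>\<^bsub>Zcyc m\<^esub> y = (x + y) mod m"
  by (simp add: Zcyc_def)

lemma one_Zcyc [simp]: "\<one>\<^bsub>Zcyc m\<^esub> = 0"
  by (simp add: Zcyc_def)

lemma group_Zcyc: "m > 0 \<Longrightarrow> group (Zcyc m)"
proof (rule groupI)
  fix x assume "m > 0" "x \<in> carrier (Zcyc m)"
  then show "\<exists>y\<in>carrier (Zcyc m). y \<otimes>\<^bsub>Zcyc m\<^esub> x = \<one>\<^bsub>Zcyc m\<^esub>"
    by (intro bexI[of _ "(m - x) mod m"]) (auto simp: mod_add_left_eq)
qed (auto simp: mod_simps add.assoc)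

lemma auto_Zcyc_apply:
  assumes f: "f \<in> auto (Zcyc m)" and "x < m"
  shows "f x = f 1 * x mod m"
  using \<open>x < m\<close>
proof (induction x)
  case 0
  have "f 0 = (f 0 + f 0) mod m"
    using f 0 hom_mult[of f "Zcyc m" "Zcyc m" 0 0] by (simp add: auto_def)
  moreover have "f 0 < m"
    using f 0 by (auto simp: auto_def Bij_def bij_betw_def)
  ultimately show ?case
    by (cases "f 0 + f 0 < m") (auto simp: le_mod_geq)
next
  case (Suc x)
  have "f (Suc x) = (f x + f 1) mod m"
    using f Suc.prems hom_mult[of f "Zcyc m" "Zcyc m" x 1] by (simp add: auto_def)
  then show ?case
    using Suc by (simp add: mod_simps algebra_simps)
qed

lemma auto_Zcyc_eq:
  assumes "f \<in> auto (Zcyc m)"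
  shows "f = (\<lambda>x\<in>{0..<m}. f 1 * x mod m)"
proof
  fix x
  have "f \<in> extensional {0..<m}"
    using assms by (simp add: auto_def Bij_def)
  then show "f x = (\<lambda>x\<in>{0..<m}. f 1 * x mod m) x"
    using auto_Zcyc_apply[OF assms] by (cases "x < m") (auto simp: extensional_def)
qed

lemma inj_on_auto_Zcyc_apply_one: "inj_on (\<lambda>f. f 1) (auto (Zcyc m))"
proof (rule inj_onI)
  fix f g
  assume f: "f \<in> auto (Zcyc m)" and g: "g \<in> auto (Zcyc m)" and "f 1 = g 1"
  have "f = (\<lambda>x\<in>{0..<m}. f 1 * x mod m)"
    by (rule auto_Zcyc_eq[OF f])
  also have "\<dots> = g"
    by (simp only: \<open>f 1 = g 1\<close> auto_Zcyc_eq[OF g, symmetric])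
  finally show "f = g" .
qed

lemma auto_Zcyc_unit:
  assumes f: "f \<in> auto (Zcyc m)" and "1 < m"
  shows "f 1 < m" "coprime (f 1) m"
proof -
  show "f 1 < m"
    using f \<open>1 < m\<close> by (auto simp: auto_def Bij_def bij_betw_def)
  have "1 \<in> f ` {0..<m}"
    using f \<open>1 < m\<close> by (auto simp: auto_def Bij_def bij_betw_def)
  then obtain x where "x < m" "f 1 * x mod m = 1"
    using auto_Zcyc_apply[OF f] by auto
  then have "[f 1 * x = 1] (mod m)"
    using \<open>1 < m\<close> by (simp add: cong_def)
  then show "coprime (f 1) m"
    by (metis cong_imp_coprime cong_sym coprime_1_left coprime_mult_left_iff)
qed

lemma mult_in_auto_Zcyc:
  assumes "coprime u m"
  shows "(\<lambda>x\<in>{0..<m}. u * x mod m) \<in> auto (Zcyc m)"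
proof -
  let ?f = "\<lambda>x\<in>{0..<m}. u * x mod m"
  have inj: "inj_on ?f {0..<m}"
  proof (rule inj_onI)
    fix x y assume "x \<in> {0..<m}" "y \<in> {0..<m}" "?f x = ?f y"
    then have "[u * x = u * y] (mod m)" "x < m" "y < m"
      by (auto simp: cong_def)
    then show "x = y"
      using assms by (metis cong_mult_lcancel_nat coprime_commute cong_less_modulus_unique_nat)
  qed
  have "?f ` {0..<m} \<subseteq> {0..<m}"
    by auto
  then have "bij_betw ?f {0..<m} {0..<m}"
    using inj endo_inj_surj[of "{0..<m}" ?f] by (simp add: bij_betw_def)
  moreover have "?f \<in> hom (Zcyc m) (Zcyc m)"
    by (auto simp: hom_def mod_simps algebra_simps)
  ultimately show ?thesis
    by (simp add: auto_def Bij_def)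
qed

lemma card_auto_Zcyc:
  assumes "1 < m"
  shows "card (auto (Zcyc m)) = totient m"
proof -
  have "bij_betw (\<lambda>f. f 1) (auto (Zcyc m)) {u. u < m \<and> coprime u m}"
  proof (rule bij_betwI[where g = "\<lambda>u. \<lambda>x\<in>{0..<m}. u * x mod m"])
    show "(\<lambda>f. f 1) \<in> auto (Zcyc m) \<rightarrow> {u. u < m \<and> coprime u m}"
      using auto_Zcyc_unit assms by auto
    show "(\<lambda>u. \<lambda>x\<in>{0..<m}. u * x mod m) \<in> {u. u < m \<and> coprime u m} \<rightarrow> auto (Zcyc m)"
      using mult_in_auto_Zcyc by auto
    show "(\<lambda>x\<in>{0..<m}. f 1 * x mod m) = f" if "f \<in> auto (Zcyc m)" for f
      using auto_Zcyc_eq[OF that] by simp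
  qed (use assms in auto)
  then have "card (auto (Zcyc m)) = card {u. u < m \<and> coprime u m}"
    by (rule bij_betw_same_card)
  also have "{u. u < m \<and> coprime u m} = totatives m"
    using assms by (auto simp: totatives_def intro!: Nat.gr0I dest: le_neq_implies_less)
  finally show ?thesis
    by (simp add: totient_def)
qed

lemma mult_AutoGroup:
  "f \<in> auto G \<Longrightarrow> g \<in> auto G \<Longrightarrow> f \<otimes>\<^bsub>AutoGroup G\<^esub> g = compose (carrier G) f g"
  by (simp add: AutoGroup_def BijGroup_def auto_def)

lemma one_AutoGroup: "\<one>\<^bsub>AutoGroup G\<^esub> = (\<lambda>x\<in>carrier G. x)"
  by (simp add: AutoGroup_def BijGroup_def)

lemma AutoGroup_mult_apply:
  "f \<in> auto G \<Longrightarrow> g \<in> auto G \<Longrightarrow> x \<in> carrier G \<Longrightarrow> (f \<otimes>\<^bsub>AutoGroup G\<^esub> g) x = f (g x)"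
  by (simp add: mult_AutoGroup compose_def)

lemma auto_apply_closed: "f \<in> auto G \<Longrightarrow> x \<in> carrier G \<Longrightarrow> f x \<in> carrier G"
  by (rule hom_in_carrier[of f G G]) (simp_all add: auto_def)

lemma auto_Zcyc_apply_apply:
  assumes "f \<in> auto (Zcyc m)" "g \<in> auto (Zcyc m)" "x < m"
  shows "f (g x) = f 1 * g 1 * x mod m"
  using assms auto_Zcyc_apply[OF assms(2)] auto_Zcyc_apply[OF assms(1), of "g x"]
  by (simp add: mod_mult_right_eq mult.assoc)

lemma AutoGroup_Zcyc_m_comm:
  assumes "f \<in> auto (Zcyc m)" "g \<in> auto (Zcyc m)"
  shows "f \<otimes>\<^bsub>AutoGroup (Zcyc m)\<^esub> g = g \<otimes>\<^bsub>AutoGroup (Zcyc m)\<^esub> f"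
  using assms auto_Zcyc_apply_apply[OF assms] auto_Zcyc_apply_apply[OF assms(2,1)]
  by (auto simp: mult_AutoGroup compose_def mult.commute intro!: restrict_ext)

lemma AutoGroup_Zcyc_pow_apply_one:
  assumes f: "f \<in> auto (Zcyc m)" and "1 < m"
  shows "(f [^]\<^bsub>AutoGroup (Zcyc m)\<^esub> k) 1 = f 1 ^ k mod m"
proof (induction k)
  case 0
  then show ?case
    using \<open>1 < m\<close> by (simp add: one_AutoGroup)
next
  case (Suc k)
  interpret A: group "AutoGroup (Zcyc m)"
    using \<open>1 < m\<close> by (simp add: group.AutoGroup group_Zcyc)
  have fk: "f [^]\<^bsub>AutoGroup (Zcyc m)\<^esub> k \<in> auto (Zcyc m)"
    using A.nat_pow_closed f by (simp add: AutoGroup_def)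
  have "(f [^]\<^bsub>AutoGroup (Zcyc m)\<^esub> Suc k) 1 = (f [^]\<^bsub>AutoGroup (Zcyc m)\<^esub> k) (f 1)"
    using fk f \<open>1 < m\<close> by (simp add: AutoGroup_mult_apply)
  also have "\<dots> = f 1 ^ Suc k mod m"
    using auto_Zcyc_apply_apply[OF fk f, of 1] Suc.IH \<open>1 < m\<close>
    by (simp add: mod_mult_left_eq power_Suc2 del: power_Suc)
  finally show ?case .
qed

lemma carrier_sdprod [simp]: "carrier (sdprod N H) = carrier N \<times> carrier H"
  by (simp add: sdprod_def)

lemma mult_sdprod [simp]:
  "(a, f) \<otimes>\<^bsub>sdprod N H\<^esub> (b, g) = (a \<otimes>\<^bsub>N\<^esub> f b, f \<otimes>\<^bsub>H\<^esub> g)"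
  by (simp add: sdprod_def)

lemma one_sdprod [simp]: "\<one>\<^bsub>sdprod N H\<^esub> = (\<one>\<^bsub>N\<^esub>, \<one>\<^bsub>H\<^esub>)"
  by (simp add: sdprod_def)

lemma (in group) auto_apply_inv: "h \<in> auto G \<Longrightarrow> x \<in> carrier G \<Longrightarrow> h (inv x) = inv (h x)"
  by (rule group_hom.hom_inv) (simp_all add: group_hom_def group_hom_axioms_def is_group auto_def)

lemma (in group) group_sdprod_AutoGroup:
  assumes "subgroup K (AutoGroup G)"
  shows "group (sdprod G ((AutoGroup G)\<lparr>carrier := K\<rparr>))"
proof -
  interpret A: group "AutoGroup G"
    by (rule AutoGroup)
  interpret K: subgroup K "AutoGroup G"
    by (rule assms)
  have auto: "f \<in> auto G" if "f \<in> K" for f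
    using that K.subset by (auto simp: AutoGroup_def)
  have hom: "f \<in> hom G G" if "f \<in> K" for f
    using auto[OF that] by (simp add: auto_def)
  show ?thesis
  proof (rule groupI; clarsimp)
    fix a f b
    assume "a \<in> carrier G" "f \<in> K" "b \<in> carrier G"
    then show "a \<otimes> f b \<in> carrier G"
      by (simp add: auto auto_apply_closed)
  next
    fix a f b g c h
    assume a: "a \<in> carrier G" and f: "f \<in> K" and b: "b \<in> carrier G" and g: "g \<in> K"
      and c: "c \<in> carrier G" and h: "h \<in> K"
    have "f (b \<otimes> g c) = f b \<otimes> f (g c)"
      by (rule hom_mult[OF hom[OF f] b auto_apply_closed[OF auto[OF g] c]])
    then have "a \<otimes> f b \<otimes> (f \<otimes>\<^bsub>AutoGroup G\<^esub> g) c = a \<otimes> f (b \<otimes> g c)"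
      using a b c f g by (simp add: AutoGroup_mult_apply auto auto_apply_closed m_assoc)
    moreover have "f \<otimes>\<^bsub>AutoGroup G\<^esub> g \<otimes>\<^bsub>AutoGroup G\<^esub> h = f \<otimes>\<^bsub>AutoGroup G\<^esub> (g \<otimes>\<^bsub>AutoGroup G\<^esub> h)"
      using f g h K.subset by (intro A.m_assoc) auto
    ultimately show "a \<otimes> f b \<otimes> (f \<otimes>\<^bsub>AutoGroup G\<^esub> g) c = a \<otimes> f (b \<otimes> g c)
             \<and> f \<otimes>\<^bsub>AutoGroup G\<^esub> g \<otimes>\<^bsub>AutoGroup G\<^esub> h = f \<otimes>\<^bsub>AutoGroup G\<^esub> (g \<otimes>\<^bsub>AutoGroup G\<^esub> h)" ..
  next
    fix a
    assume "a \<in> carrier G"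
    then show "\<one> \<otimes> \<one>\<^bsub>AutoGroup G\<^esub> a = a"
      by (simp add: one_AutoGroup)
  next
    fix a f
    assume a: "a \<in> carrier G" and f: "f \<in> K"
    define g where "g = inv\<^bsub>AutoGroup G\<^esub> f"
    have g: "g \<in> K"
      using f by (simp add: g_def)
    have "g (inv a) \<otimes> g a = \<one>"
      using a auto_apply_closed[OF auto[OF g] a] by (simp add: auto_apply_inv[OF auto[OF g]])
    moreover have "g \<otimes>\<^bsub>AutoGroup G\<^esub> f = \<one>\<^bsub>AutoGroup G\<^esub>"
      using f K.subset by (auto simp: g_def)
    moreover have "g (inv a) \<in> carrier G"
      using auto_apply_closed[OF auto[OF g] inv_closed[OF a]] .
    ultimately show "\<exists>b\<in>carrier G. \<exists>h\<in>K. b \<otimes> h a = \<one> \<and> h \<otimes>\<^bsub>AutoGroup G\<^esub> f = \<one>\<^bsub>AutoGroup G\<^esub>"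
      using g by blast
  qed
qed

lemma (in group) commutator_eqI:
  assumes "x \<in> carrier G" "y \<in> carrier G" "c \<in> carrier G" and "c \<otimes> (y \<otimes> x) = x \<otimes> y"
  shows "x \<otimes> y \<otimes> inv x \<otimes> inv y = c"
proof -
  have "c = x \<otimes> y \<otimes> inv (y \<otimes> x)"
    using inv_solve_right assms m_closed by metis
  also have "\<dots> = x \<otimes> y \<otimes> inv x \<otimes> inv y"
    using assms by (simp add: inv_mult_group m_assoc)
  finally show ?thesis
    by simp
qed

lemma (in group) card_rcosets_mult_card:
  assumes "subgroup H G" "subgroup J G" "J \<subseteq> H"
  shows "card (rcosets\<^bsub>G\<lparr>carrier := H\<rparr>\<^esub> J) * card J = card H"
  using group.lagrange[OF subgroup_imp_group[OF assms(1)] subgroup_incl[OF assms(2,1,3)]]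
  by (simp add: order_def)

abbreviation commutator_set :: "('a, 'b) monoid_scheme \<Rightarrow> 'a set \<Rightarrow> 'a set" where
  "commutator_set G H \<equiv>
     \<Union>h \<in> H. \<Union>g \<in> carrier G. {h \<otimes>\<^bsub>G\<^esub> g \<otimes>\<^bsub>G\<^esub> inv\<^bsub>G\<^esub> h \<otimes>\<^bsub>G\<^esub> inv\<^bsub>G\<^esub> g}"

lemma card_multiples_below:
  assumes "0 < d"
  shows "card {a::nat. a < d * k \<and> d dvd a} = k"
proof -
  have "{a::nat. a < d * k \<and> d dvd a} = (\<lambda>i. d * i) ` {..<k}"
    using assms by (auto simp: image_iff elim!: dvdE)
  moreover have "inj_on (\<lambda>i. d * i) {..<k}"
    using assms by (auto intro: inj_onI)
  ultimately show ?thesis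
    by (simp add: card_image)
qed

lemma card_cong_below_le:
  assumes "0 < d"
  shows "card {u::nat. u < d * k \<and> [u = r] (mod d)} \<le> k"
proof -
  have "inj_on (\<lambda>u. u div d) {u. u < d * k \<and> [u = r] (mod d)}"
    by (rule inj_onI) (metis (mono_tags, lifting) cong_def div_mult_mod_eq mem_Collect_eq)
  moreover have "(\<lambda>u. u div d) ` {u. u < d * k \<and> [u = r] (mod d)} \<subseteq> {..<k}"
    by (auto simp: less_mult_imp_div_less mult.commute)
  ultimately show ?thesis
    using card_inj_on_le[of _ _ "{..<k}"] by fastforce
qed

lemma cong_one_iff_dvd_one_minus: "[u = 1] (mod d) \<longleftrightarrow> int d dvd 1 - int u"
  by (metis cong_int_iff cong_iff_dvd_diff cong_sym_eq of_nat_1)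

lemma multiplicity_totient_prime_power:
  assumes "Factorial_Ring.prime p" "0 < n"
  shows "multiplicity p (totient (p ^ n)) = n - 1"
proof -
  have "\<not> p dvd p - 1"
    using prime_gt_1_nat[OF assms(1)] by (auto dest: dvd_imp_le)
  then have "multiplicity p ((p - 1) * p ^ (n - 1)) = multiplicity p (p ^ (n - 1))"
    using assms(1) by (intro multiplicity_prime_elem_times_other) auto
  then show ?thesis
    using assms by (simp add: totient_prime_power mult.commute)
qed

locale Zcyc_holomorph_Sylow =
  fixes p n :: nat and K :: "(nat \<Rightarrow> nat) set"
  assumes prime: "Factorial_Ring.prime p" and two_le_n: "2 \<le> n"
    and subgroup_K: "subgroup K (AutoGroup (Zcyc (p ^ n)))"
    and card_K_Sylow: "card K = p ^ multiplicity p (order (AutoGroup (Zcyc (p ^ n))))"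
begin

abbreviation "m \<equiv> p ^ n"
abbreviation "A \<equiv> AutoGroup (Zcyc m)"
abbreviation "G \<equiv> sdprod (Zcyc m) (A\<lparr>carrier := K\<rparr>)"

lemma one_lt_m: "1 < m"
  using one_less_power[of p n] two_le_n prime_gt_1_nat[OF prime] by simp

sublocale A: group A
  using group.AutoGroup[OF group_Zcyc] prime_gt_0_nat[OF prime] by simp

sublocale G: group G
  using group.group_sdprod_AutoGroup[OF group_Zcyc subgroup_K] prime_gt_0_nat[OF prime] by simp

lemma K_auto: "f \<in> K \<Longrightarrow> f \<in> auto (Zcyc m)"
  using subgroup.subset[OF subgroup_K] by (auto simp: AutoGroup_def)

lemma K_apply: "f \<in> K \<Longrightarrow> x < m \<Longrightarrow> f x = f 1 * x mod m"
  using auto_Zcyc_apply K_auto by blast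

lemma one_A_apply: "x < m \<Longrightarrow> \<one>\<^bsub>A\<^esub> x = x"
  by (simp add: one_AutoGroup)

lemma card_K: "card K = p ^ (n - 1)"
  using card_K_Sylow card_auto_Zcyc[OF one_lt_m] multiplicity_totient_prime_power[OF prime] two_le_n
  by (simp add: order_def AutoGroup_def)

lemma K_cong_one:
  assumes "f \<in> K"
  shows "[f 1 = 1] (mod p)"
proof -
  have f: "f \<in> auto (Zcyc m)"
    using assms by (rule K_auto)
  interpret K: group "A\<lparr>carrier := K\<rparr>"
    using A.subgroup_imp_group[OF subgroup_K] .
  have "f [^]\<^bsub>A\<lparr>carrier := K\<rparr>\<^esub> card K = \<one>\<^bsub>A\<^esub>"
    using K.pow_order_eq_1[of f] assms by (simp add: order_def)
  then have pow: "f [^]\<^bsub>A\<^esub> p ^ (n - 1) = \<one>\<^bsub>A\<^esub>"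
    by (simp add: card_K A.nat_pow_consistent[of f _ K])
  have "f 1 ^ p ^ (n - 1) mod m = (f [^]\<^bsub>A\<^esub> p ^ (n - 1)) 1"
    by (rule AutoGroup_Zcyc_pow_apply_one[OF f one_lt_m, symmetric])
  also have "\<dots> = 1 mod m"
    using one_lt_m by (simp only: pow one_A_apply mod_less)
  finally have "[f 1 ^ p ^ (n - 1) = 1] (mod m)"
    unfolding cong_def .
  moreover have "p dvd m"
    using two_le_n by simp
  ultimately have "[f 1 ^ p ^ (n - 1) = 1] (mod p)"
    by (rule cong_dvd_modulus_nat)
  moreover have "[f 1 ^ (p - 1) = 1] (mod p)"
  proof (rule fermat_theorem[OF prime])
    show "\<not> p dvd f 1"
    proof
      assume "p dvd f 1"
      then show False
        using coprime_common_divisor_nat[OF auto_Zcyc_unit(2)[OF f one_lt_m]] \<open>p dvd m\<close>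
          prime_gt_1_nat[OF prime] by fastforce
    qed
  qed
  ultimately have "ord p (f 1) dvd gcd (p ^ (n - 1)) (p - 1)"
    by (metis ord_divides gcd_greatest)
  also have "gcd (p ^ (n - 1)) (p - 1) = 1"
    using coprime_diff_one_right_nat[OF prime_gt_0_nat[OF prime]] coprime_power_left_iff
      coprime_iff_gcd_eq_1 by metis
  finally show ?thesis
    using ord_divides[of "f 1" 1 p] by (metis power_one_right)
qed

lemma exists_K_not_cong_one_mod_p_squared: "\<exists>g\<in>K. \<not> [g 1 = 1] (mod p\<^sup>2)"
proof (rule ccontr)
  assume "\<not> ?thesis"
  moreover have "m = p\<^sup>2 * p ^ (n - 2)"
    using two_le_n by (metis le_add_diff_inverse power_add)
  ultimately have "(\<lambda>f. f 1) ` K \<subseteq> {u. u < p\<^sup>2 * p ^ (n - 2) \<and> [u = 1] (mod p\<^sup>2)}"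
    using auto_Zcyc_unit(1)[OF K_auto one_lt_m] by fastforce
  moreover have "inj_on (\<lambda>f. f 1) K"
    using inj_on_subset[OF inj_on_auto_Zcyc_apply_one] K_auto by blast
  ultimately have "card K \<le> card {u. u < p\<^sup>2 * p ^ (n - 2) \<and> [u = 1] (mod p\<^sup>2)}"
    by (intro card_inj_on_le) auto
  also have "\<dots> \<le> p ^ (n - 2)"
    using prime_gt_0_nat[OF prime] by (intro card_cong_below_le) simp
  also have "\<dots> < p ^ (n - 1)"
    using prime_gt_1_nat[OF prime] two_le_n by (intro power_strict_increasing) auto
  finally show False
    by (simp add: card_K)
qed

lemma exists_K_one_minus_p_times_unit: "\<exists>g\<in>K. \<exists>w. [(1 - int (g 1)) * w = int p] (mod int m)"
proof -
  obtain g where g: "g \<in> K" "\<not> [g 1 = 1] (mod p\<^sup>2)"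
    using exists_K_not_cong_one_mod_p_squared by blast
  have "int p dvd 1 - int (g 1)"
    using cong_one_iff_dvd_one_minus K_cong_one[OF g(1)] by blast
  then obtain v where v: "1 - int (g 1) = int p * v" ..
  have "\<not> int p dvd v"
  proof
    assume "int p dvd v"
    then have "int (p\<^sup>2) dvd 1 - int (g 1)"
      using v by (simp add: power2_eq_square)
    then show False
      using g(2) cong_one_iff_dvd_one_minus by blast
  qed
  then have "coprime (int p) v"
    using prime by (intro prime_imp_coprime) simp_all
  then have "coprime v (int m)"
    by (simp add: coprime_commute)
  then obtain w where "[v * w = 1] (mod int m)"
    using cong_solve_coprime_int by blast
  then have "[(1 - int (g 1)) * w = int p] (mod int m)"
    using v by (metis cong_scalar_left mult.assoc mult.right_neutral)
  then show ?thesis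
    using g(1) by blast
qed

lemma commutator_G_eq:
  assumes "a < m" "f \<in> K" "b < m" "g \<in> K"
  shows "(a, f) \<otimes>\<^bsub>G\<^esub> (b, g) \<otimes>\<^bsub>G\<^esub> inv\<^bsub>G\<^esub> (a, f) \<otimes>\<^bsub>G\<^esub> inv\<^bsub>G\<^esub> (b, g)
       = (nat ((int a * (1 - int (g 1)) - int b * (1 - int (f 1))) mod int m), \<one>\<^bsub>A\<^esub>)"
    (is "_ = (nat (?X mod _), _)")
proof -
  define c where "c = nat (?X mod int m)"
  have "0 < int m"
    using one_lt_m by linarith
  then have "[int c = ?X] (mod int m)"
    by (simp add: c_def cong_def del: of_nat_power)
  then have "[int c + (int b + int (g 1) * int a) = ?X + (int b + int (g 1) * int a)] (mod int m)"
    by (rule cong_add[OF _ cong_refl])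
  also have "?X + (int b + int (g 1) * int a) = int a + int (f 1) * int b"
    by (simp add: algebra_simps)
  finally have "[c + (b + g 1 * a) = a + f 1 * b] (mod m)"
    by (simp flip: cong_int_iff)
  then have "(c + (b + g a) mod m) mod m = (a + f b) mod m"
    using assms by (simp add: K_apply cong_def mod_simps)
  moreover have "g \<otimes>\<^bsub>A\<^esub> f \<in> carrier A"
    using assms subgroup.m_closed[OF subgroup_K] subgroup.subset[OF subgroup_K] by blast
  then have "\<one>\<^bsub>A\<^esub> \<otimes>\<^bsub>A\<^esub> (g \<otimes>\<^bsub>A\<^esub> f) = f \<otimes>\<^bsub>A\<^esub> g"
    using AutoGroup_Zcyc_m_comm[OF K_auto K_auto] assms by simp
  moreover have "(b + g a) mod m < m"
    using one_lt_m by (intro mod_less_divisor) linarith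
  ultimately have "(c, \<one>\<^bsub>A\<^esub>) \<otimes>\<^bsub>G\<^esub> ((b, g) \<otimes>\<^bsub>G\<^esub> (a, f)) = (a, f) \<otimes>\<^bsub>G\<^esub> (b, g)"
    by (simp add: one_AutoGroup)
  moreover have "c < m"
    unfolding c_def using \<open>0 < int m\<close> by (subst nat_less_iff) (simp_all del: of_nat_power)
  ultimately show ?thesis
    unfolding c_def[symmetric] using assms subgroup.one_closed[OF subgroup_K]
    by (intro G.commutator_eqI) simp_all
qed

definition pN :: "nat \<Rightarrow> (nat \<times> (nat \<Rightarrow> nat)) set" where
  "pN j = {a. a < m \<and> p ^ j dvd a} \<times> {\<one>\<^bsub>A\<^esub>}"

lemma subgroup_pN:
  assumes "j \<le> n"
  shows "subgroup (pN j) G"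
proof (rule G.subgroupI)
  have "p ^ j dvd m"
    using assms by (rule le_imp_power_dvd)
  show "pN j \<subseteq> carrier G"
    using subgroup.one_closed[OF subgroup_K] by (auto simp: pN_def)
  have "(0, \<one>\<^bsub>A\<^esub>) \<in> pN j"
    using prime_gt_0_nat[OF prime] by (simp add: pN_def)
  then show "pN j \<noteq> {}"
    by blast
  fix x y
  assume x: "x \<in> pN j" and y: "y \<in> pN j"
  then obtain a b where ab: "x = (a, \<one>\<^bsub>A\<^esub>)" "a < m" "p ^ j dvd a"
    "y = (b, \<one>\<^bsub>A\<^esub>)" "b < m" "p ^ j dvd b"
    by (auto simp: pN_def)
  have "((m - a) mod m, \<one>\<^bsub>A\<^esub>) \<otimes>\<^bsub>G\<^esub> x = \<one>\<^bsub>G\<^esub>"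
    using ab by (simp add: one_A_apply mod_add_left_eq)
  then have "inv\<^bsub>G\<^esub> x = ((m - a) mod m, \<one>\<^bsub>A\<^esub>)"
    using ab subgroup.one_closed[OF subgroup_K] prime_gt_0_nat[OF prime]
    by (intro G.inv_equality) simp_all
  then show "inv\<^bsub>G\<^esub> x \<in> pN j"
    using ab \<open>p ^ j dvd m\<close> prime_gt_0_nat[OF prime] by (simp add: pN_def dvd_mod dvd_diff_nat)
  have "x \<otimes>\<^bsub>G\<^esub> y = ((a + b) mod m, \<one>\<^bsub>A\<^esub>)"
    using ab by (simp add: one_A_apply)
  then show "x \<otimes>\<^bsub>G\<^esub> y \<in> pN j"
    using ab \<open>p ^ j dvd m\<close> prime_gt_0_nat[OF prime] by (simp add: pN_def dvd_mod)
qed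

lemma card_pN:
  assumes "j \<le> n"
  shows "card (pN j) = p ^ (n - j)"
proof -
  have "m = p ^ j * p ^ (n - j)"
    using assms by (simp flip: power_add)
  then have "card {a. a < m \<and> p ^ j dvd a} = p ^ (n - j)"
    using prime_gt_0_nat[OF prime] by (simp add: card_multiples_below)
  then show ?thesis
    by (simp add: pN_def card_cartesian_product)
qed

lemma commutator_in_pN:
  assumes h: "(a, f) \<in> carrier G" and y: "y \<in> carrier G" and "j < n"
    and "p ^ j dvd a" and "int (p ^ Suc j) dvd 1 - int (f 1)"
  shows "(a, f) \<otimes>\<^bsub>G\<^esub> y \<otimes>\<^bsub>G\<^esub> inv\<^bsub>G\<^esub> (a, f) \<otimes>\<^bsub>G\<^esub> inv\<^bsub>G\<^esub> y \<in> pN (Suc j)"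
proof -
  obtain b g where y: "y = (b, g)" "b < m" "g \<in> K"
    using y by auto
  let ?X = "int a * (1 - int (g 1)) - int b * (1 - int (f 1))"
  have "int (p ^ j) dvd int a"
    using \<open>p ^ j dvd a\<close> by (simp only: int_dvd_int_iff)
  moreover have "int p dvd 1 - int (g 1)"
    using K_cong_one[OF y(3)] cong_one_iff_dvd_one_minus by blast
  ultimately have "int (p ^ j) * int p dvd int a * (1 - int (g 1))"
    by (rule mult_dvd_mono)
  then have "int (p ^ Suc j) dvd ?X"
    using \<open>int (p ^ Suc j) dvd 1 - int (f 1)\<close> by (simp add: power_Suc2 mult.commute)
  moreover have "int (p ^ Suc j) dvd int m"
    using \<open>j < n\<close> by (simp only: int_dvd_int_iff) (rule le_imp_power_dvd, simp)
  ultimately have "int (p ^ Suc j) dvd ?X mod int m"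
    by (simp only: dvd_mod_iff)
  moreover have "0 < int m"
    using one_lt_m by linarith
  ultimately have "p ^ Suc j dvd nat (?X mod int m)" "nat (?X mod int m) < m"
    by (simp_all add: nat_less_iff flip: int_dvd_int_iff del: of_nat_power)
  then show ?thesis
    using commutator_G_eq h y by (simp add: pN_def)
qed

lemma pN_Suc_commutator:
  assumes "j < n" "x \<in> pN (Suc j)"
  obtains a g where "(a, \<one>\<^bsub>A\<^esub>) \<in> pN j" "g \<in> K"
    "x = (a, \<one>\<^bsub>A\<^esub>) \<otimes>\<^bsub>G\<^esub> (0, g) \<otimes>\<^bsub>G\<^esub> inv\<^bsub>G\<^esub> (a, \<one>\<^bsub>A\<^esub>) \<otimes>\<^bsub>G\<^esub> inv\<^bsub>G\<^esub> (0, g)"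
proof -
  obtain t s where x: "x = (t, \<one>\<^bsub>A\<^esub>)" "t < m" "t = p ^ Suc j * s"
    using assms(2) by (auto simp: pN_def elim!: dvdE)
  obtain g w where g: "g \<in> K" "[(1 - int (g 1)) * w = int p] (mod int m)"
    using exists_K_one_minus_p_times_unit by blast
  define a where "a = nat ((int (p ^ j) * int s * w) mod int m)"
  have "0 < int m"
    using one_lt_m by linarith
  then have a: "int a = (int (p ^ j) * int s * w) mod int m"
    by (simp add: a_def del: of_nat_power)
  have "int (p ^ j) dvd int m"
    using \<open>j < n\<close> by (simp only: int_dvd_int_iff) (rule le_imp_power_dvd, simp)
  then have "int (p ^ j) dvd int a"
    unfolding a by (simp only: dvd_mod_iff) (simp add: mult.assoc)
  moreover have "a < m"
    unfolding a_def using \<open>0 < int m\<close> by (subst nat_less_iff) (simp_all del: of_nat_power)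
  ultimately have a_pN: "(a, \<one>\<^bsub>A\<^esub>) \<in> pN j"
    by (simp add: pN_def flip: int_dvd_int_iff)
  have "[int a = int (p ^ j) * int s * w] (mod int m)"
    unfolding a cong_def by simp
  then have "[int a * (1 - int (g 1)) = int (p ^ j) * int s * w * (1 - int (g 1))] (mod int m)"
    by (rule cong_mult[OF _ cong_refl])
  also have "int (p ^ j) * int s * w * (1 - int (g 1)) = int (p ^ j) * int s * ((1 - int (g 1)) * w)"
    by (simp only: ac_simps)
  also have "[\<dots> = int (p ^ j) * int s * int p] (mod int m)"
    using g(2) by (rule cong_scalar_left)
  also have "int (p ^ j) * int s * int p = int t"
    using x(3) by (simp add: power_Suc2 ac_simps)
  finally have "nat ((int a * (1 - int (g 1)) - int 0 * (1 - int (\<one>\<^bsub>A\<^esub> 1))) mod int m) = t"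
    using x(2) by (simp add: cong_def flip: of_nat_mod del: of_nat_power)
  then have "x = (a, \<one>\<^bsub>A\<^esub>) \<otimes>\<^bsub>G\<^esub> (0, g) \<otimes>\<^bsub>G\<^esub> inv\<^bsub>G\<^esub> (a, \<one>\<^bsub>A\<^esub>) \<otimes>\<^bsub>G\<^esub> inv\<^bsub>G\<^esub> (0, g)"
    using commutator_G_eq[of a "\<one>\<^bsub>A\<^esub>" 0 g] x(1) g(1) \<open>a < m\<close> subgroup.one_closed[OF subgroup_K]
      prime_gt_0_nat[OF prime] by simp
  then show ?thesis
    using that a_pN g(1) by blast
qed

lemma generate_commutator_set_eq_pN:
  assumes "j < n" "pN j \<subseteq> H" "H \<subseteq> carrier G"
    and depth: "\<And>a f. (a, f) \<in> H \<Longrightarrow> p ^ j dvd a \<and> int (p ^ Suc j) dvd 1 - int (f 1)"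
  shows "generate G (commutator_set G H) = pN (Suc j)"
proof
  show "generate G (commutator_set G H) \<subseteq> pN (Suc j)"
  proof (rule G.generate_subgroup_incl)
    show "subgroup (pN (Suc j)) G"
      using \<open>j < n\<close> by (intro subgroup_pN) simp
    show "commutator_set G H \<subseteq> pN (Suc j)"
    proof
      fix x
      assume "x \<in> commutator_set G H"
      then obtain h y where "h \<in> H" "y \<in> carrier G"
        "x = h \<otimes>\<^bsub>G\<^esub> y \<otimes>\<^bsub>G\<^esub> inv\<^bsub>G\<^esub> h \<otimes>\<^bsub>G\<^esub> inv\<^bsub>G\<^esub> y"
        by blast
      moreover obtain a f where "h = (a, f)"
        by fastforce
      ultimately show "x \<in> pN (Suc j)"
        using depth[of a f] \<open>H \<subseteq> carrier G\<close> by (auto intro!: commutator_in_pN[OF _ _ \<open>j < n\<close>])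
    qed
  qed
  show "pN (Suc j) \<subseteq> generate G (commutator_set G H)"
  proof
    fix x
    assume "x \<in> pN (Suc j)"
    then obtain a g where "(a, \<one>\<^bsub>A\<^esub>) \<in> pN j" "g \<in> K"
      "x = (a, \<one>\<^bsub>A\<^esub>) \<otimes>\<^bsub>G\<^esub> (0, g) \<otimes>\<^bsub>G\<^esub> inv\<^bsub>G\<^esub> (a, \<one>\<^bsub>A\<^esub>) \<otimes>\<^bsub>G\<^esub> inv\<^bsub>G\<^esub> (0, g)"
      using pN_Suc_commutator[OF \<open>j < n\<close>] by blast
    moreover have "(0, g) \<in> carrier G"
      using \<open>g \<in> K\<close> prime_gt_0_nat[OF prime] by simp
    ultimately have "x \<in> commutator_set G H"
      using \<open>pN j \<subseteq> H\<close> by blast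
    then show "x \<in> generate G (commutator_set G H)"
      by (rule generate.incl)
  qed
qed

lemma lcs_G_eq_pN: "Suc j \<le> n \<Longrightarrow> lcs G (Suc (Suc j)) = pN (Suc j)"
proof (induction j)
  case 0
  have "generate G (commutator_set G (carrier G)) = pN (Suc 0)"
  proof (rule generate_commutator_set_eq_pN)
    show "pN 0 \<subseteq> carrier G"
      using subgroup_pN[of 0] G.subgroupE(1) by blast
    show "p ^ 0 dvd a \<and> int (p ^ Suc 0) dvd 1 - int (f 1)" if "(a, f) \<in> carrier G" for a f
      using that K_cong_one cong_one_iff_dvd_one_minus by auto
  qed (use 0 in auto)
  then show ?case
    by simp
next
  case (Suc j)
  have "generate G (commutator_set G (pN (Suc j))) = pN (Suc (Suc j))"
  proof (rule generate_commutator_set_eq_pN)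
    show "pN (Suc j) \<subseteq> carrier G"
      using subgroup_pN[of "Suc j"] Suc.prems G.subgroupE(1) by simp
    show "p ^ Suc j dvd a \<and> int (p ^ Suc (Suc j)) dvd 1 - int (f 1)" if "(a, f) \<in> pN (Suc j)" for a f
      using that one_A_apply[OF one_lt_m] by (auto simp: pN_def)
  qed (use Suc.prems in auto)
  then show ?case
    using Suc by simp
qed

lemma card_rcosets_derived_G: "card (rcosets\<^bsub>G\<^esub> (derived G (carrier G))) = p ^ n"
proof -
  have "derived G (carrier G) = pN 1"
    using lcs_G_eq_pN[of 0] two_le_n by (simp add: derived_def)
  moreover have "card (rcosets\<^bsub>G\<^esub> (pN 1)) * p ^ (n - 1) = p ^ n * p ^ (n - 1)"
    using G.lagrange[OF subgroup_pN[of 1]] two_le_n card_pN[of 1]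
    by (simp add: order_def card_cartesian_product card_K)
  ultimately show ?thesis
    using prime_gt_0_nat[OF prime] by simp
qed

lemma card_rcosets_lcs_G:
  assumes "2 \<le> i" "i \<le> n"
  shows "card (rcosets\<^bsub>G\<lparr>carrier := lcs G i\<rparr>\<^esub> (lcs G (Suc i))) = p"
proof -
  have lcs: "lcs G i = pN (i - 1)" "lcs G (Suc i) = pN i"
    using assms lcs_G_eq_pN[of "i - 2"] lcs_G_eq_pN[of "i - 1"] by (simp_all add: Suc_diff_Suc numeral_2_eq_2)
  have "p ^ (i - 1) dvd p ^ i"
    by (rule le_imp_power_dvd) simp
  then have "pN i \<subseteq> pN (i - 1)"
    by (auto simp: pN_def intro: dvd_trans)
  then have "card (rcosets\<^bsub>G\<lparr>carrier := pN (i - 1)\<rparr>\<^esub> (pN i)) * p ^ (n - i) = p ^ (n - (i - 1))"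
    using G.card_rcosets_mult_card[OF subgroup_pN subgroup_pN] card_pN assms by simp
  also have "p ^ (n - (i - 1)) = p * p ^ (n - i)"
    using assms by (simp flip: power_Suc add: Suc_diff_le)
  finally show ?thesis
    using prime_gt_0_nat[OF prime] by (simp add: lcs)
qed

end

theorem lemma2p7:
  fixes p n :: nat and K :: "(nat \<Rightarrow> nat) set"
  assumes "Factorial_Ring.prime p" and "n \<ge> 2"
    and "subgroup K (AutoGroup (Zcyc (p ^ n)))"
    and "card K = p ^ multiplicity p (order (AutoGroup (Zcyc (p ^ n))))"
  defines "G \<equiv> sdprod (Zcyc (p ^ n)) ((AutoGroup (Zcyc (p ^ n)))\<lparr>carrier := K\<rparr>)"
  shows "card (rcosets\<^bsub>G\<^esub> (derived G (carrier G))) = p ^ n \<and>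
         (\<forall>i \<in> {2..n}. card (rcosets\<^bsub>G\<lparr>carrier := lcs G i\<rparr>\<^esub> (lcs G (Suc i))) = p)"
proof -
  interpret Zcyc_holomorph_Sylow p n K
    by (rule Zcyc_holomorph_Sylow.intro[OF assms(1-4)])
  show ?thesis
    unfolding G_def using card_rcosets_derived_G card_rcosets_lcs_G by simp
qed

end
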